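(* Let $0\le c<\sqrt2-1$, let $K\ge1$ be an integer, let $t$ be a positive integer such that $R=(1+c)t$ is an integer with $R\ge10$, and let $L=R^{2K+1}$. For $l\in[K]$ with $cR^{K-l}$ an integer, define $g_l=\big(1_{R^{K+1+l},R^{K-l}}\,2_{R^{K+1+l},R^{K-l}}\big)^{L/R^{K+1+l}}$. Let $w_1,w_2$ be words over $[K]$ using only letters $l$ with $cR^{K-l}$ an integer, let $\hat w$ denote the word obtained from $w$ by replacing each letter $l$ by $g_l$, and let $s=(w_1',w_2')$ be any common subsequence between $\hat w_1$ and $\hat w_2$. Then \[\operatorname{span} s\ \ge\ \left(3+c-\frac{28}{R}\right)\operatorname{len} s-16L\cdot\mathrm{LCS}(w_1,w_2)-\frac{40L}{R}.\]
   Context: Words $g_l$ are over $\{1,2\}$; $\alpha^m$ is letter $\alpha$ repeated $m$ times and $u^m$ is $m$ concatenated copies of $u$. For positive integers $M,a$ with $ca$, $M/((1+c)a)$ integers, $1_{M,a}=(1^a2^{ca})^{M/((1+c)a)}$ and $2_{M,a}=(2^a1^{ca})^{M/((1+c)a)}$. Symbols are distinguishable positions. A common subsequence of $u_1,u_2$ is a pair $(u_1',u_2')$ of subsequences of $u_1,u_2$ equal as words, of length $\operatorname{len}$; $\mathrm{LCS}(u_1,u_2)$ is the maximal length of a common subsequence. The span of a subsequence $u'$ in $u$ is the length of the shortest block of consecutive symbols of $u$ containing it, and $\operatorname{span}(w_1',w_2')=\operatorname{span}_{\hat w_1}w_1'+\operatorname{span}_{\hat w_2}w_2'$. *)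

theory Defs
  imports Complex_Main "HOL-Library.Sublist"
begin

text \<open>1_{M,a} = (1^a 2^{ca})^{M/((1+c)a)} and 2_{M,a} = (2^a 1^{ca})^{M/((1+c)a)};
  ca is assumed to be an integer (used via nat floor), and M/((1+c)a) integer.\<close>
definition one_blk :: "real \<Rightarrow> nat \<Rightarrow> nat \<Rightarrow> nat list" where
  "one_blk c M a = concat (replicate (nat \<lfloor>real M / ((1 + c) * real a)\<rfloor>)
                      (replicate a 1 @ replicate (nat \<lfloor>c * real a\<rfloor>) 2))"

definition two_blk :: "real \<Rightarrow> nat \<Rightarrow> nat \<Rightarrow> nat list" where
  "two_blk c M a = concat (replicate (nat \<lfloor>real M / ((1 + c) * real a)\<rfloor>)
                      (replicate a 2 @ replicate (nat \<lfloor>c * real a\<rfloor>) 1))"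

definition gword :: "real \<Rightarrow> nat \<Rightarrow> nat \<Rightarrow> nat \<Rightarrow> nat list" where
  "gword c R K l = concat (replicate (R ^ (2*K+1) div R ^ (K+1+l))
       (one_blk c (R ^ (K+1+l)) (R ^ (K-l)) @ two_blk c (R ^ (K+1+l)) (R ^ (K-l))))"

definition hat :: "real \<Rightarrow> nat \<Rightarrow> nat \<Rightarrow> nat list \<Rightarrow> nat list" where
  "hat c R K w = concat (map (gword c R K) w)"

text \<open>A common subsequence (with distinguishable symbols) is a pair of position sets
  selecting equal words.\<close>
definition common_subseq :: "'a list \<Rightarrow> 'a list \<Rightarrow> nat set \<Rightarrow> nat set \<Rightarrow> bool" where
  "common_subseq u1 u2 I1 I2 \<longleftrightarrow>
     I1 \<subseteq> {..<length u1} \<and> I2 \<subseteq> {..<length u2} \<and> nths u1 I1 = nths u2 I2"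

definition span_pos :: "nat set \<Rightarrow> nat" where
  "span_pos I = (if I = {} then 0 else Max I - Min I + 1)"

definition LCS :: "'a list \<Rightarrow> 'a list \<Rightarrow> nat" where
  "LCS u1 u2 = Max {length v | v. subseq v u1 \<and> subseq v u2}"

end

theory Submission
  imports Defs
begin

text \<open>
  A common subsequence is a list of matched position pairs, increasing in both coordinates, and
  its span is the sum of the two coordinate ranges. Spans are superadditive under splitting such
  a list, so it suffices to bound them on pieces while paying a fixed error per piece.

  Inside one pair of letter blocks, \<open>g\<^sub>l\<close> against \<open>g\<^sub>l\<close> costs 2 per matched pair. For
  \<open>g\<^sub>l\<close> against \<open>g\<^sub>m\<close> with \<open>l < m\<close>, the runs of \<open>g\<^sub>l\<close> are \<open>R\<close> times longer and its flips
  \<open>R\<close> times more frequent than those of \<open>g\<^sub>m\<close>. Within one flip block of \<open>g\<^sub>m\<close>, pairs in its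
  sparse \<open>c\<close>-parts cost \<open>3 + c\<close> in the second coordinate alone (this is where
  \<open>c < \<surd>2 - 1\<close> enters), while pairs in its dense parts cost \<open>1 + c\<close> there and, since
  their partners all carry the same letter of the quickly flipping \<open>g\<^sub>l\<close>, another 2 in the
  first coordinate. So such pairs cost \<open>3 + c\<close>, up to errors of relative size \<open>1 / R\<close>.

  Finally, crossing letter blocks is paid for by the span itself, and the pairs between copies
  of the same word number at most \<open>4 L\<close> per letter of a common subsequence of \<open>w\<^sub>1\<close> and \<open>w\<^sub>2\<close>.
\<close>

section \<open>Matchings and their spans\<close>

definition increasing_pairs :: "(nat \<times> nat) list \<Rightarrow> bool" where
  "increasing_pairs ps \<longleftrightarrow> sorted_wrt (\<lambda>p q. fst p < fst q \<and> snd p < snd q) ps"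

definition coord_span :: "('a \<Rightarrow> nat) \<Rightarrow> 'a list \<Rightarrow> real" where
  "coord_span f xs = (if xs = [] then 0 else real (f (last xs)) - real (f (hd xs)) + 1)"

definition pairs_span :: "(nat \<times> nat) list \<Rightarrow> real" where
  "pairs_span ps = coord_span fst ps + coord_span snd ps"

lemma increasing_pairs_append:
  "increasing_pairs (xs @ ys) \<longleftrightarrow> increasing_pairs xs \<and> increasing_pairs ys
     \<and> (\<forall>p\<in>set xs. \<forall>q\<in>set ys. fst p < fst q \<and> snd p < snd q)"
  by (simp add: increasing_pairs_def sorted_wrt_append)

lemma increasing_pairs_sorted_wrt:
  assumes "increasing_pairs ps"
  shows "sorted_wrt (\<lambda>p q. fst p < fst q) ps" "sorted_wrt (\<lambda>p q. snd p < snd q) ps"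
  using assms unfolding increasing_pairs_def by (auto elim: sorted_wrt_mono_rel[rotated])

lemma increasing_pairs_swap: "increasing_pairs ps \<Longrightarrow> increasing_pairs (map prod.swap ps)"
  unfolding increasing_pairs_def by (auto simp: sorted_wrt_map elim: sorted_wrt_mono_rel[rotated])

lemma pairs_span_swap: "pairs_span (map prod.swap ps) = pairs_span ps"
  by (simp add: pairs_span_def coord_span_def last_map hd_map)

lemma sorted_wrt_hd_le:
  "sorted_wrt (\<lambda>x y. f x < f y) xs \<Longrightarrow> x \<in> set xs \<Longrightarrow> f (hd xs) \<le> (f x :: 'b :: linorder)"
  by (cases xs) (auto intro: less_imp_le)

lemma sorted_wrt_le_last:
  "sorted_wrt (\<lambda>x y. f x < f y) xs \<Longrightarrow> x \<in> set xs \<Longrightarrow> (f x :: 'b :: linorder) \<le> f (last xs)"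
  by (induction xs rule: rev_induct) (auto simp: sorted_wrt_append intro: less_imp_le)

lemma sorted_wrt_less_distinct:
  "sorted_wrt (\<lambda>x y. f x < f y) xs \<Longrightarrow> distinct (map (f :: 'a \<Rightarrow> 'b :: linorder) xs)"
  by (simp add: sorted_wrt_map[of "(<)" f xs, symmetric] strict_sorted_iff)

lemma coord_span_eq:
  assumes "sorted_wrt (\<lambda>x y. f x < f y) xs" "xs \<noteq> []"
  shows "coord_span f xs = real (Suc (f (last xs)) - f (hd xs))"
  using sorted_wrt_hd_le[OF assms(1), of "last xs"] assms(2) by (simp add: coord_span_def of_nat_diff)

lemma coord_span_nonneg: "sorted_wrt (\<lambda>x y. f x < f y) xs \<Longrightarrow> 0 \<le> coord_span f xs"
  by (cases "xs = []") (simp add: coord_span_def, simp add: coord_span_eq)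

lemma coord_span_append_ge:
  assumes "sorted_wrt (\<lambda>x y. f x < f y) (xs @ ys)" "xs \<noteq> []" "ys \<noteq> []"
  shows "coord_span f xs + coord_span f ys \<le> coord_span f (xs @ ys)"
proof -
  have "f (last xs) < f (hd ys)"
    using assms by (simp add: sorted_wrt_append)
  then show ?thesis
    using assms(2,3) by (simp add: coord_span_def)
qed

lemma coord_span_ge_length:
  "sorted_wrt (\<lambda>x y. f x < f y) xs \<Longrightarrow> real (length xs) \<le> coord_span f xs"
proof (induction xs)
  case (Cons x xs)
  then show ?case
    by (cases xs) (auto simp: coord_span_def)
qed (simp add: coord_span_def)

lemma pairs_span_append_ge:
  assumes "increasing_pairs (xs @ ys)" "xs \<noteq> []" "ys \<noteq> []"
  shows "pairs_span xs + pairs_span ys \<le> pairs_span (xs @ ys)"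
  using coord_span_append_ge[OF increasing_pairs_sorted_wrt(1)[OF assms(1)] assms(2,3)]
    coord_span_append_ge[OF increasing_pairs_sorted_wrt(2)[OF assms(1)] assms(2,3)]
  by (simp add: pairs_span_def)

lemma scaled_pairs_span_append_ge:
  assumes "0 \<le> k" "increasing_pairs (xs @ ys)" "xs \<noteq> []" "ys \<noteq> []"
  shows "k * pairs_span xs + k * pairs_span ys \<le> k * pairs_span (xs @ ys)"
  using mult_left_mono[OF pairs_span_append_ge[OF assms(2-4)] assms(1)] by (simp add: distrib_left)

lemma pairs_span_ge_length: "increasing_pairs ps \<Longrightarrow> 2 * real (length ps) \<le> pairs_span ps"
  using coord_span_ge_length[OF increasing_pairs_sorted_wrt(1)]
    coord_span_ge_length[OF increasing_pairs_sorted_wrt(2)]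
  by (fastforce simp: pairs_span_def)

lemma first_run_decomposition:
  assumes "ps \<noteq> []" "sorted (map key ps)"
  obtains xs ys where "ps = xs @ ys" "xs \<noteq> []" "\<forall>x\<in>set xs. key x = key (hd ps)"
    "ys \<noteq> [] \<Longrightarrow> key (hd ps) < key (hd ys)"
proof
  let ?P = "\<lambda>x. key x = key (hd ps)"
  show "ps = takeWhile ?P ps @ dropWhile ?P ps" by simp
  show "takeWhile ?P ps \<noteq> []" using assms(1) by (cases ps) auto
  show "\<forall>x\<in>set (takeWhile ?P ps). ?P x" by (blast dest: set_takeWhileD)
  assume ne: "dropWhile ?P ps \<noteq> []"
  have "hd (dropWhile ?P ps) \<in> set ps"
    using set_dropWhileD[OF hd_in_set[OF ne]] .
  moreover have "\<forall>y\<in>set ps. key (hd ps) \<le> key y"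
    using assms by (cases ps) auto
  ultimately have "key (hd ps) \<le> key (hd (dropWhile ?P ps))" by blast
  moreover have "\<not> ?P (hd (dropWhile ?P ps))"
    using hd_dropWhile[OF ne] .
  ultimately show "key (hd ps) < key (hd (dropWhile ?P ps))" by simp
qed

text \<open>The accounting device behind all span bounds below: the error \<open>\<beta>\<close> is paid once per key
  value.\<close>
lemma superadditive_bound_by_runs:
  fixes S :: "'a list \<Rightarrow> real" and w :: "'a \<Rightarrow> real" and key :: "'a \<Rightarrow> nat"
  assumes hereditary: "\<And>xs ys. Q (xs @ ys) \<Longrightarrow> Q xs \<and> Q ys"
    and superadditive: "\<And>xs ys. Q (xs @ ys) \<Longrightarrow> xs \<noteq> [] \<Longrightarrow> ys \<noteq> [] \<Longrightarrow> S xs + S ys \<le> S (xs @ ys)"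
    and run_bound: "\<And>xs. Q xs \<Longrightarrow> xs \<noteq> [] \<Longrightarrow> \<forall>x\<in>set xs. key x = key (hd xs)
                      \<Longrightarrow> sum_list (map w xs) - \<beta> \<le> S xs"
    and "Q ps" "ps \<noteq> []" "sorted (map key ps)" "0 \<le> \<beta>"
  shows "sum_list (map w ps) - \<beta> * (real (key (last ps)) - real (key (hd ps)) + 1) \<le> S ps"
  using assms(4-6)
proof (induction "length ps" arbitrary: ps rule: less_induct)
  case less
  obtain xs ys where ps: "ps = xs @ ys" and "xs \<noteq> []"
    and run: "\<forall>x\<in>set xs. key x = key (hd ps)" and step: "ys \<noteq> [] \<Longrightarrow> key (hd ps) < key (hd ys)"
    using first_run_decomposition[OF less.prems(2,3)] by blast
  have hd_xs: "hd xs = hd ps" using ps \<open>xs \<noteq> []\<close> by simp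
  have "Q xs" "Q ys" using hereditary[of xs ys] less.prems(1) ps by simp_all
  have xs_bound: "sum_list (map w xs) - \<beta> \<le> S xs"
    using run_bound[OF \<open>Q xs\<close> \<open>xs \<noteq> []\<close>] run unfolding hd_xs by blast
  show ?case
  proof (cases "ys = []")
    case True
    then have "last ps \<in> set xs" using ps \<open>xs \<noteq> []\<close> by simp
    then have "key (last ps) = key (hd ps)" using run by blast
    then show ?thesis using xs_bound ps True by simp
  next
    case False
    have "sum_list (map w ys) - \<beta> * (real (key (last ys)) - real (key (hd ys)) + 1) \<le> S ys"
      using less.hyps[of ys] less.prems(3) ps \<open>Q ys\<close> \<open>xs \<noteq> []\<close> False
      by (simp add: sorted_append)
    moreover have "\<beta> * (real (key (last ys)) - real (key (hd ys)) + 1) + \<beta>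
        \<le> \<beta> * (real (key (last ps)) - real (key (hd ps)) + 1)"
    proof -
      have "real (key (last ys)) - real (key (hd ys)) + 1 + 1
          \<le> real (key (last ps)) - real (key (hd ps)) + 1"
        using step[OF False] ps False by simp
      then show ?thesis
        using mult_left_mono[OF _ \<open>0 \<le> \<beta>\<close>] by (fastforce simp: distrib_left)
    qed
    moreover have "S xs + S ys \<le> S ps"
      using superadditive[of xs ys] less.prems(1) ps \<open>xs \<noteq> []\<close> False by simp
    ultimately show ?thesis using xs_bound ps by simp
  qed
qed

section \<open>Counting in periodic words\<close>

lemma card_less_Suc_filter:
  "card {k. k < Suc y \<and> P k} = card {k. k < y \<and> P k} + (if P y then 1 else 0)"
proof -
  have "{k. k < Suc y \<and> P k} = (if P y then insert y {k. k < y \<and> P k} else {k. k < y \<and> P k})"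
    by (auto simp: less_Suc_eq)
  then show ?thesis by simp
qed

lemma card_interval_partition:
  "card {k. x \<le> k \<and> k \<le> z \<and> P k} + card {k. x \<le> k \<and> k \<le> z \<and> \<not> P k} = Suc z - x"
proof -
  have "{x..z} = {k. x \<le> k \<and> k \<le> z \<and> P k} \<union> {k. x \<le> k \<and> k \<le> z \<and> \<not> P k}" by auto
  moreover have "card ({k. x \<le> k \<and> k \<le> z \<and> P k} \<union> {k. x \<le> k \<and> k \<le> z \<and> \<not> P k})
      = card {k. x \<le> k \<and> k \<le> z \<and> P k} + card {k. x \<le> k \<and> k \<le> z \<and> \<not> P k}"
    by (rule card_Un_disjoint) auto
  ultimately show ?thesis by (metis card_atLeastAtMost)
qed

lemma card_mod_less:
  assumes "0 < p" "a \<le> p"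
  shows "card {k. k < y \<and> k mod p < a} = y div p * a + min (y mod p) a"
proof (induction y)
  case (Suc y)
  show ?case
  proof (cases "Suc (y mod p) = p")
    case True
    then have "Suc y div p = Suc (y div p)" "Suc y mod p = 0" by (simp_all add: div_Suc mod_Suc)
    moreover have "min (y mod p) a + (if y mod p < a then 1 else 0) = a"
      using True assms by auto
    ultimately show ?thesis using Suc card_less_Suc_filter[of y "\<lambda>k. k mod p < a"] by simp
  next
    case False
    then have "Suc y div p = y div p" "Suc y mod p = Suc (y mod p)" by (simp_all add: div_Suc mod_Suc)
    then show ?thesis using Suc card_less_Suc_filter[of y "\<lambda>k. k mod p < a"] by auto
  qed
qed simp

lemma card_mod_less_deviation:
  fixes a b y :: nat and c :: real
  assumes "0 < a" "real b = c * real a" "0 \<le> c"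
  defines "n \<equiv> card {k. k < y \<and> k mod (a + b) < a}"
  shows "- real b \<le> real y - (1 + c) * real n" "real y - (1 + c) * real n \<le> 0"
proof -
  define r where "r = y mod (a + b)"
  have y: "real y = real (y div (a + b)) * (real a + real b) + real r"
    unfolding r_def by (metis div_mult_mod_eq of_nat_add of_nat_mult)
  have n: "n = y div (a + b) * a + min r a"
    unfolding n_def r_def using assms(1) by (simp add: card_mod_less)
  have "r < a + b" using assms(1) by (simp add: r_def)
  then have "real y - (1 + c) * real n = real r - (1 + c) * real (min r a)"
    using y n assms(2) by (simp add: algebra_simps)
  moreover have "- real b \<le> real r - (1 + c) * real (min r a)"
    using assms(2,3) mult_left_mono[of r a c] by (cases "r \<le> a") (auto simp: algebra_simps)
  moreover have "real r - (1 + c) * real (min r a) \<le> 0"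
    using assms(2,3) \<open>r < a + b\<close> by (cases "r \<le> a") (auto simp: algebra_simps)
  ultimately show "- real b \<le> real y - (1 + c) * real n" "real y - (1 + c) * real n \<le> 0"
    by simp_all
qed

lemma interval_card_mod_less_deviation:
  fixes a b x z :: nat and c :: real
  assumes "0 < a" "real b = c * real a" "0 \<le> c" "x \<le> z"
  defines "n \<equiv> card {k. x \<le> k \<and> k \<le> z \<and> k mod (a + b) < a}"
  shows "\<bar>real (Suc z - x) - (1 + c) * real n\<bar> \<le> real b"
proof -
  let ?P = "\<lambda>k. k mod (a + b) < a"
  have "{k. x \<le> k \<and> k \<le> z \<and> ?P k} = {k. k < Suc z \<and> ?P k} - {k. k < x \<and> ?P k}"
    by auto
  moreover have "{k. k < x \<and> ?P k} \<subseteq> {k. k < Suc z \<and> ?P k}" using assms(4) by auto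
  ultimately have "(1 + c) * real n
      = (1 + c) * real (card {k. k < Suc z \<and> ?P k}) - (1 + c) * real (card {k. k < x \<and> ?P k})"
    unfolding n_def by (simp add: card_Diff_subset of_nat_diff card_mono right_diff_distrib)
  then show ?thesis
    using card_mod_less_deviation[OF assms(1-3), of "Suc z"] card_mod_less_deviation[OF assms(1-3), of x]
      assms(4) by (simp add: abs_le_iff)
qed

lemma interval_length_ge_dense_card:
  assumes "0 < a" "real b = c * real a" "0 \<le> c" "c \<le> 1" "x \<le> z"
    "Q \<subseteq> {k. x \<le> k \<and> k \<le> z \<and> k mod (a + b) < a}"
  shows "(1 + c) * real (card Q) - real a \<le> real (Suc z - x)"
proof -
  define n where "n = card {k. x \<le> k \<and> k \<le> z \<and> k mod (a + b) < a}"
  have "card Q \<le> n" unfolding n_def using assms(6) by (intro card_mono) auto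
  then have "(1 + c) * real (card Q) \<le> (1 + c) * real n" using assms(3) by (intro mult_left_mono) auto
  moreover have "real b \<le> real a" using assms(2,4) mult_right_mono[of c 1 "real a"] by simp
  ultimately show ?thesis
    using interval_card_mod_less_deviation[OF assms(1-3,5)] by (simp add: n_def abs_le_iff)
qed

text \<open>The \<open>b\<close>-parts have density \<open>c / (1 + c)\<close>, which is at most \<open>1 / (3 + c)\<close> exactly when
  \<open>c\<^sup>2 + 2 c \<le> 1\<close>.\<close>
lemma interval_length_ge_sparse_card:
  assumes "0 < a" "real b = c * real a" "0 \<le> c" "c * c + 2 * c \<le> 1" "x \<le> z"
    "Q \<subseteq> {k. x \<le> k \<and> k \<le> z \<and> \<not> k mod (a + b) < a}"
  shows "(3 + c) * real (card Q) - real a \<le> real (Suc z - x)"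
proof -
  define n where "n = card {k. x \<le> k \<and> k \<le> z \<and> k mod (a + b) < a}"
  define F where "F = {k. x \<le> k \<and> k \<le> z \<and> \<not> k mod (a + b) < a}"
  have "Suc z - x = n + card F"
    unfolding n_def F_def by (rule card_interval_partition[symmetric])
  moreover have "card Q \<le> card F" unfolding F_def using assms(6) by (intro card_mono) auto
  ultimately have "(1 + c) * real (card Q) \<le> c * real (Suc z - x) + real b"
    using interval_card_mod_less_deviation[OF assms(1-3,5)] assms(3)
      mult_left_mono[of "real (card Q)" "real (Suc z - x) - real n" "1 + c"]
    by (simp add: n_def abs_le_iff algebra_simps)
  have "(1 + c) * ((3 + c) * real (card Q)) = (3 + c) * ((1 + c) * real (card Q))" by simp
  also have "\<dots> \<le> (3 + c) * (c * real (Suc z - x) + real b)"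
    using \<open>(1 + c) * real (card Q) \<le> _\<close> assms(3) by (intro mult_left_mono) auto
  also have "\<dots> = ((3 + c) * c) * real (Suc z - x) + ((3 + c) * c) * real a"
    using assms(2) by (simp add: algebra_simps)
  also have "\<dots> \<le> (1 + c) * real (Suc z - x) + (1 + c) * real a"
    using assms(4) by (intro add_mono mult_right_mono) (auto simp: algebra_simps)
  finally have "(1 + c) * ((3 + c) * real (card Q)) \<le> (1 + c) * (real (Suc z - x) + real a)"
    by (simp add: distrib_left)
  then show ?thesis using assms(3) by simp
qed

lemma interval_length_ge_weighted_card:
  assumes "0 < a" "real b = c * real a" "0 \<le> c" "c * c + 2 * c \<le> 1" "x \<le> z"
    "Q \<subseteq> {x..z}" "\<forall>q\<in>Q. (q mod (a + b) < a) = \<tau>"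
  shows "(if \<tau> then 1 + c else 3 + c) * real (card Q) - real a \<le> real (Suc z - x)"
proof (cases \<tau>)
  case True
  have "c \<le> 1" using assms(3,4) zero_le_square[of c] by linarith
  moreover have "Q \<subseteq> {k. x \<le> k \<and> k \<le> z \<and> k mod (a + b) < a}" using assms(6,7) True by auto
  ultimately show ?thesis using interval_length_ge_dense_card[OF assms(1-3) _ assms(5)] True by simp
next
  case False
  then have "Q \<subseteq> {k. x \<le> k \<and> k \<le> z \<and> \<not> k mod (a + b) < a}" using assms(6,7) by auto
  then show ?thesis using interval_length_ge_sparse_card[OF assms(1-5)] False by simp
qed

text \<open>The letter at position \<open>x\<close> of the infinite word \<open>1\<^sub>M\<^sub>,\<^sub>a 2\<^sub>M\<^sub>,\<^sub>a 1\<^sub>M\<^sub>,\<^sub>a 2\<^sub>M\<^sub>,\<^sub>a \<dots>\<close> with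
  \<open>b = c a\<close>: the parity of the \<open>M\<close>-block decides whether the \<open>a\<close>-part of the current period
  carries the letter 1 or 2.\<close>
definition block_symbol :: "nat \<Rightarrow> nat \<Rightarrow> nat \<Rightarrow> nat \<Rightarrow> nat" where
  "block_symbol a b M x = (if even (x div M) = (x mod (a + b) < a) then 1 else 2)"

lemma block_symbol_shift:
  assumes "(a + b) dvd M" "0 < M"
  shows "block_symbol a b M (y + M) \<noteq> block_symbol a b M y"
proof -
  have "(y + M) div M = Suc (y div M)" using assms(2) by simp
  moreover have "(y + M) mod (a + b) = y mod (a + b)" using assms(1) by (auto elim!: dvdE)
  ultimately show ?thesis by (simp add: block_symbol_def)
qed

text \<open>Shifting by \<open>M\<close> maps the occurrences of a letter injectively to occurrences of the
  other letter, except for the last \<open>M\<close> positions.\<close>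
lemma card_block_symbol_le:
  assumes "(a + b) dvd M" "0 < M"
  shows "2 * card {y. x \<le> y \<and> y \<le> z \<and> block_symbol a b M y = \<sigma>} \<le> Suc z - x + M"
proof -
  define A where "A = {y. x \<le> y \<and> y \<le> z \<and> block_symbol a b M y = \<sigma>}"
  define B where "B = {y. x \<le> y \<and> y \<le> z \<and> block_symbol a b M y \<noteq> \<sigma>}"
  define A1 where "A1 = {y \<in> A. y + M \<le> z}"
  have AB: "card A + card B = Suc z - x"
    unfolding A_def B_def by (rule card_interval_partition)
  have "(\<lambda>y. y + M) ` A1 \<subseteq> B"
    using block_symbol_shift[OF assms] by (auto simp: A1_def A_def B_def)
  then have "card A1 \<le> card B"
    by (intro card_inj_on_le[of "\<lambda>y. y + M"]) (auto simp: B_def inj_on_def)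
  moreover have "card (A - A1) \<le> M"
  proof -
    have "card (A - A1) \<le> card {Suc z - M..z}" by (intro card_mono) (auto simp: A1_def A_def)
    then show ?thesis by simp
  qed
  moreover have "card A = card A1 + card (A - A1)"
  proof -
    have "finite A" "A1 \<subseteq> A" by (auto simp: A_def A1_def)
    then show ?thesis by (simp add: card_Diff_subset card_mono finite_subset)
  qed
  ultimately show ?thesis using AB by (simp add: A_def)
qed

section \<open>Two levels against each other\<close>

lemma div_diff_le:
  fixes p q m :: nat
  assumes "0 < m" "p \<le> q"
  shows "real (q div m) - real (p div m) \<le> (real q - real p) / real m + 1"
proof -
  have "q div m * m \<le> q" by (rule div_times_less_eq_dividend)
  then have "real (q div m) * real m \<le> real q" by (simp flip: of_nat_mult)
  moreover have "p < (p div m + 1) * m"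
    using mod_less_divisor[OF assms(1), of p] div_mult_mod_eq[of p m] unfolding distrib_right mult_1 by linarith
  then have "real p < (real (p div m) + 1) * real m"
    by (metis of_nat_1 of_nat_add of_nat_less_iff of_nat_mult)
  ultimately have "(real (q div m) - real (p div m)) * real m \<le> real q - real p + real m"
    by (simp add: algebra_simps)
  then show ?thesis using assms(1) by (simp add: field_simps)
qed

lemma coord_span_ge_blocks:
  assumes "sorted_wrt (\<lambda>x y. f x < f y) xs" "xs \<noteq> []" "0 < N"
  shows "real N * (real (f (last xs) div N) - real (f (hd xs) div N)) - real N \<le> coord_span f xs"
proof -
  have "real (f (last xs) div N) - real (f (hd xs) div N) \<le> (real (f (last xs)) - real (f (hd xs))) / real N + 1"
    using div_diff_le[OF assms(3)] sorted_wrt_hd_le[OF assms(1), of "last xs"] assms(2) by simp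
  then have "real N * (real (f (last xs) div N) - real (f (hd xs) div N))
      \<le> real (f (last xs)) - real (f (hd xs)) + real N"
    using assms(3) by (simp add: field_simps)
  then show ?thesis using assms(2) by (simp add: coord_span_def)
qed

lemma sum_list_map_if:
  "sum_list (map (\<lambda>x. if P x then A else B) xs)
     = A * real (length (filter P xs)) + B * real (length (filter (\<lambda>x. \<not> P x) xs))"
  by (induction xs) (auto simp: algebra_simps)

lemma sum_list_map_eq_const:
  "\<forall>x\<in>set xs. f x = (W :: real) \<Longrightarrow> sum_list (map f xs) = W * real (length xs)"
  by (induction xs) (auto simp: algebra_simps)

text \<open>Two levels of the construction as seen by a matching: the first coordinate reads a
  pattern with long runs \<open>a\<close> but a short flip period \<open>M\<close>, the second a pattern with runs
  shorter by the factor \<open>R\<close> and a flip period longer by \<open>R\<close>.\<close>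
locale two_scales =
  fixes a b M a' b' M' :: nat and c :: real and R :: nat
  assumes a'_pos: "0 < a'"
    and b_eq: "real b = c * real a" and b'_eq: "real b' = c * real a'"
    and c_nonneg: "0 \<le> c" and c_small: "c * c + 2 * c \<le> 1"
    and period_dvd: "(a + b) dvd M" and M_pos: "0 < M"
    and run_ratio: "R * a' \<le> a" and block_ratio: "R * M \<le> M'" and run_block: "4 * R * a' \<le> M'"
    and R_pos: "0 < R"
begin

lemma a_pos: "0 < a"
  using a'_pos R_pos run_ratio by (metis mult_pos_pos order.strict_trans2)

lemma M'_pos: "0 < M'"
  using a'_pos R_pos run_block by (metis mult_pos_pos order.strict_trans2 zero_less_numeral)

text \<open>The runs of constant letter of the first pattern, numbered consecutively.\<close>
definition run_index :: "nat \<Rightarrow> nat" where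
  "run_index p = 2 * (p div (a + b)) + (if p mod (a + b) < a then 0 else 1)"

definition weight :: "nat \<Rightarrow> real" where
  "weight q = (if q mod (a' + b') < a' then 1 + c else 3 + c)"

lemma run_index_mono: "p \<le> p' \<Longrightarrow> run_index p \<le> run_index p'"
proof -
  assume "p \<le> p'"
  then have le: "p div (a + b) \<le> p' div (a + b)" by (rule div_le_mono)
  show ?thesis
  proof (cases "p div (a + b) = p' div (a + b)")
    case True
    have "p div (a + b) * (a + b) + p mod (a + b) \<le> p' div (a + b) * (a + b) + p' mod (a + b)"
      using \<open>p \<le> p'\<close> by (simp only: div_mult_mod_eq)
    then have "p mod (a + b) \<le> p' mod (a + b)" using True by simp
    then show ?thesis using True by (auto simp: run_index_def)
  next
    case False
    then show ?thesis using le by (auto simp: run_index_def)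
  qed
qed

lemma block_symbol_eq_if_same_run:
  assumes "run_index p = run_index p'"
  shows "block_symbol a b M p = block_symbol a b M p'"
proof -
  have div2: "run_index q div 2 = q div (a + b)" and odd: "odd (run_index q) \<longleftrightarrow> \<not> q mod (a + b) < a"
    for q by (auto simp: run_index_def)
  have "p div (a + b) = p' div (a + b)" using div2[of p] div2[of p'] assms by simp
  moreover have "(p mod (a + b) < a) = (p' mod (a + b) < a)" using odd[of p] odd[of p'] assms by simp
  moreover obtain k where "M = (a + b) * k" using period_dvd by (rule dvdE)
  ultimately show ?thesis by (simp add: block_symbol_def div_mult2_eq)
qed

lemma run_count_le:
  assumes "p \<le> p'"
  shows "real a' * (real (run_index p') - real (run_index p) + 1)
    \<le> 2 * (real p' - real p + 1) / real R + 4 * real a'"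
proof -
  have "0 < a + b" using a_pos by simp
  have "real (run_index p') \<le> 2 * real (p' div (a + b)) + 1" "2 * real (p div (a + b)) \<le> real (run_index p)"
    by (simp_all add: run_index_def)
  then have "real (run_index p') - real (run_index p) + 1 \<le> 2 * ((real p' - real p) / real (a + b)) + 4"
    using div_diff_le[OF \<open>0 < a + b\<close> assms] by linarith
  then have "real a' * (real (run_index p') - real (run_index p) + 1)
      \<le> real a' * (2 * ((real p' - real p) / real (a + b)) + 4)"
    by (rule mult_left_mono) simp
  also have "\<dots> = 2 * (real p' - real p) * (real a' / real (a + b)) + 4 * real a'"
    by (simp add: field_simps)
  also have "\<dots> \<le> 2 * (real p' - real p) * (1 / real R) + 4 * real a'"
  proof -
    have "real a' * real R \<le> real (a + b)"
      using run_ratio by (simp flip: of_nat_mult add: mult.commute)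
    then have "real a' / real (a + b) \<le> 1 / real R"
      using a_pos R_pos by (simp add: field_simps)
    then show ?thesis using assms by (intro add_right_mono mult_left_mono) auto
  qed
  also have "\<dots> \<le> 2 * (real p' - real p + 1) / real R + 4 * real a'"
    using R_pos by (simp add: divide_right_mono)
  finally show ?thesis .
qed

text \<open>Within one run of the first pattern the letter is constant, so inside one flip block of
  the second pattern all matched positions lie in its \<open>a'\<close>-parts or all in its \<open>b'\<close>-parts.\<close>
lemma coord_span_snd_ge_on_run:
  assumes "increasing_pairs ds" "ds \<noteq> []"
    and matched: "\<forall>x\<in>set ds. block_symbol a b M (fst x) = block_symbol a' b' M' (snd x)"
    and block: "\<forall>x\<in>set ds. snd x div M' = k"
    and run: "\<forall>x\<in>set ds. run_index (fst x) = run_index (fst (hd ds))"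
  shows "sum_list (map (weight \<circ> snd) ds) - real a' \<le> coord_span snd ds"
proof -
  have sorted: "sorted_wrt (\<lambda>x y. snd x < snd y) ds" by (rule increasing_pairs_sorted_wrt(2)[OF assms(1)])
  define s where "s = block_symbol a b M (fst (hd ds))"
  define \<tau> where "\<tau> = (s = 1 \<longleftrightarrow> even k)"
  have \<tau>: "\<forall>q\<in>snd ` set ds. (q mod (a' + b') < a') = \<tau>"
  proof
    fix q assume "q \<in> snd ` set ds"
    then obtain x where x: "x \<in> set ds" "q = snd x" by blast
    have "block_symbol a b M (fst x) = s"
      unfolding s_def using run x(1) by (intro block_symbol_eq_if_same_run) blast
    then have "block_symbol a' b' M' q = s" using matched x by simp
    moreover have "q div M' = k" using block x by simp
    ultimately show "(q mod (a' + b') < a') = \<tau>"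
      unfolding \<tau>_def block_symbol_def by (cases "even k"; cases "q mod (a' + b') < a'") auto
  qed
  have "snd ` set ds \<subseteq> {snd (hd ds)..snd (last ds)}"
    using sorted_wrt_hd_le[OF sorted] sorted_wrt_le_last[OF sorted] by auto
  moreover have "snd (hd ds) \<le> snd (last ds)"
    using sorted_wrt_hd_le[OF sorted, of "last ds"] assms(2) by simp
  ultimately have "(if \<tau> then 1 + c else 3 + c) * real (card (snd ` set ds)) - real a'
      \<le> real (Suc (snd (last ds)) - snd (hd ds))"
    using interval_length_ge_weighted_card[OF a'_pos b'_eq c_nonneg c_small _ _ \<tau>] by blast
  moreover have "card (snd ` set ds) = length ds"
    using distinct_card[OF sorted_wrt_less_distinct[OF sorted]] by simp
  moreover have "sum_list (map (weight \<circ> snd) ds) = (if \<tau> then 1 + c else 3 + c) * real (length ds)"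
    using \<tau> by (intro sum_list_map_eq_const) (auto simp: weight_def)
  ultimately show ?thesis
    using coord_span_eq[OF sorted assms(2)] by simp
qed

lemma coord_span_snd_ge:
  assumes "increasing_pairs cs" "cs \<noteq> []"
    and matched: "\<forall>x\<in>set cs. block_symbol a b M (fst x) = block_symbol a' b' M' (snd x)"
    and block: "\<forall>x\<in>set cs. snd x div M' = k"
  shows "sum_list (map (weight \<circ> snd) cs)
      - real a' * (real (run_index (fst (last cs))) - real (run_index (fst (hd cs))) + 1)
    \<le> coord_span snd cs"
proof (rule superadditive_bound_by_runs[where key = "run_index \<circ> fst", simplified])
  let ?Q = "\<lambda>cs. increasing_pairs cs
    \<and> (\<forall>x\<in>set cs. block_symbol a b M (fst x) = block_symbol a' b' M' (snd x))
    \<and> (\<forall>x\<in>set cs. snd x div M' = k)"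
  show "?Q xs \<and> ?Q ys" if "?Q (xs @ ys)" for xs ys
    using that by (simp add: increasing_pairs_append)
  show "coord_span snd xs + coord_span snd ys \<le> coord_span snd (xs @ ys)"
    if "?Q (xs @ ys)" "xs \<noteq> []" "ys \<noteq> []" for xs ys
    using coord_span_append_ge increasing_pairs_sorted_wrt(2) that by blast
  show "sum_list (map (weight \<circ> snd) ds) - real a' \<le> coord_span snd ds"
    if "?Q ds" "ds \<noteq> []" "\<forall>x\<in>set ds. run_index (fst x) = run_index (fst (hd ds))" for ds
    using coord_span_snd_ge_on_run that by blast
  show "?Q cs" using assms by blast
  have "sorted_wrt (\<lambda>x y. run_index (fst x) \<le> run_index (fst y)) cs"
    using increasing_pairs_sorted_wrt(1)[OF assms(1)]
    by (rule sorted_wrt_mono_rel[rotated]) (simp add: run_index_mono)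
  then show "sorted (map (run_index \<circ> fst) cs)" by (simp add: sorted_wrt_map o_def)
qed (use assms in simp_all)

text \<open>The pairs in the \<open>a'\<close>-parts of one flip block of the second pattern all carry the same
  letter, which fills only half of any interval of the first pattern, up to one flip period.\<close>
lemma coord_span_fst_ge:
  assumes "increasing_pairs cs" "cs \<noteq> []"
    and matched: "\<forall>x\<in>set cs. block_symbol a b M (fst x) = block_symbol a' b' M' (snd x)"
    and block: "\<forall>x\<in>set cs. snd x div M' = k"
  shows "2 * real (length (filter (\<lambda>x. snd x mod (a' + b') < a') cs)) - real M \<le> coord_span fst cs"
proof -
  have sorted: "sorted_wrt (\<lambda>x y. fst x < fst y) cs" by (rule increasing_pairs_sorted_wrt(1)[OF assms(1)])
  define \<sigma> where "\<sigma> = (if even k then 1 else (2::nat))"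
  define A where "A = {y. fst (hd cs) \<le> y \<and> y \<le> fst (last cs) \<and> block_symbol a b M y = \<sigma>}"
  let ?F = "filter (\<lambda>x. snd x mod (a' + b') < a') cs"
  have "fst ` set ?F \<subseteq> A"
  proof
    fix y assume "y \<in> fst ` set ?F"
    then obtain x where x: "x \<in> set cs" "snd x mod (a' + b') < a'" "y = fst x" by auto
    have "block_symbol a' b' M' (snd x) = \<sigma>" using block x by (simp add: block_symbol_def \<sigma>_def)
    then show "y \<in> A"
      using matched x sorted_wrt_hd_le[OF sorted x(1)] sorted_wrt_le_last[OF sorted x(1)]
      by (auto simp: A_def)
  qed
  moreover have "finite A"
    unfolding A_def by (rule finite_subset[of _ "{fst (hd cs)..fst (last cs)}"]) auto
  moreover have "length ?F = card (fst ` set ?F)"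
    using distinct_card[of "map fst ?F"] sorted_wrt_less_distinct[OF sorted]
    by (simp add: distinct_map_filter)
  ultimately have "length ?F \<le> card A" using card_mono by metis
  moreover have "2 * card A \<le> Suc (fst (last cs)) - fst (hd cs) + M"
    unfolding A_def by (rule card_block_symbol_le[OF period_dvd M_pos])
  ultimately show ?thesis
    using coord_span_eq[OF sorted assms(2)] by simp
qed

lemma pairs_span_ge_in_block:
  assumes "increasing_pairs cs" "cs \<noteq> []"
    and matched: "\<forall>x\<in>set cs. block_symbol a b M (fst x) = block_symbol a' b' M' (snd x)"
    and block: "\<forall>x\<in>set cs. snd x div M' = k"
  shows "(3 + c) * real (length cs) - real M - 4 * real a' \<le> (1 + 2 / real R) * pairs_span cs"
proof -
  let ?P = "\<lambda>x. snd x mod (a' + b') < a'"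
  define nT where "nT = length (filter ?P cs)"
  define nF where "nF = length (filter (\<lambda>x. \<not> ?P x) cs)"
  have "real (length cs) = real nT + real nF"
    using sum_length_filter_compl[of ?P cs] by (simp add: nT_def nF_def flip: of_nat_add)
  moreover have "sum_list (map (weight \<circ> snd) cs) = (1 + c) * real nT + (3 + c) * real nF"
    using sum_list_map_if[of ?P "1 + c" "3 + c" cs] by (simp add: weight_def nT_def nF_def o_def)
  moreover have "real a' * (real (run_index (fst (last cs))) - real (run_index (fst (hd cs))) + 1)
      \<le> 2 * coord_span fst cs / real R + 4 * real a'"
  proof -
    have "fst (hd cs) \<le> fst (last cs)"
      using sorted_wrt_hd_le[OF increasing_pairs_sorted_wrt(1)[OF assms(1)], of "last cs"] assms(2) by simp
    moreover have "coord_span fst cs = real (fst (last cs)) - real (fst (hd cs)) + 1"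
      using assms(2) by (simp add: coord_span_def)
    ultimately show ?thesis using run_count_le by simp
  qed
  ultimately have "(3 + c) * real (length cs) - real M - 4 * real a'
      \<le> coord_span fst cs + coord_span snd cs + 2 * coord_span fst cs / real R"
    using coord_span_snd_ge[OF assms] coord_span_fst_ge[OF assms, folded nT_def]
    by (simp add: algebra_simps)
  moreover have "0 \<le> coord_span snd cs / real R"
    using coord_span_nonneg[OF increasing_pairs_sorted_wrt(2)[OF assms(1)]] by simp
  ultimately show ?thesis by (simp add: pairs_span_def algebra_simps add_divide_distrib)
qed

lemma block_count_le:
  assumes "q \<le> q'"
  shows "(real M + 4 * real a') * (real (q' div M') - real (q div M') + 1)
    \<le> 2 * (real q' - real q) / real R + 2 * real M + 8 * real a'"
proof -
  have "real R * (real M + 4 * real a') \<le> 2 * real M'"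
  proof -
    have "R * (M + 4 * a') \<le> 2 * M'" using block_ratio run_block by (simp add: algebra_simps)
    then show ?thesis by (metis of_nat_add of_nat_le_iff of_nat_mult of_nat_numeral)
  qed
  then have ratio: "(real M + 4 * real a') / real M' \<le> 2 / real R"
    using R_pos M'_pos by (simp add: field_simps)
  have "(real M + 4 * real a') * (real (q' div M') - real (q div M') + 1)
      \<le> (real M + 4 * real a') * ((real q' - real q) / real M' + 2)"
    using div_diff_le[OF M'_pos assms] by (intro mult_left_mono) auto
  also have "\<dots> = (real q' - real q) * ((real M + 4 * real a') / real M') + 2 * (real M + 4 * real a')"
    by (simp add: field_simps)
  also have "\<dots> \<le> (real q' - real q) * (2 / real R) + 2 * (real M + 4 * real a')"
    using ratio assms by (intro add_right_mono mult_left_mono) auto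
  finally show ?thesis by (simp add: algebra_simps)
qed

lemma pairs_span_ge_by_flip_blocks:
  assumes "increasing_pairs cs" "cs \<noteq> []"
    and matched: "\<forall>x\<in>set cs. block_symbol a b M (fst x) = block_symbol a' b' M' (snd x)"
  shows "(3 + c) * real (length cs)
      - (real M + 4 * real a') * (real (snd (last cs) div M') - real (snd (hd cs) div M') + 1)
    \<le> (1 + 2 / real R) * pairs_span cs"
proof -
  let ?S = "\<lambda>cs. (1 + 2 / real R) * pairs_span cs"
  have "sum_list (map (\<lambda>_. 3 + c) cs)
      - (real M + 4 * real a') * (real (snd (last cs) div M') - real (snd (hd cs) div M') + 1) \<le> ?S cs"
  proof (rule superadditive_bound_by_runs[where key = "\<lambda>x. snd x div M'"])
    let ?Q = "\<lambda>cs. increasing_pairs cs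
      \<and> (\<forall>x\<in>set cs. block_symbol a b M (fst x) = block_symbol a' b' M' (snd x))"
    show "?Q xs \<and> ?Q ys" if "?Q (xs @ ys)" for xs ys
      using that by (simp add: increasing_pairs_append)
    show "?S xs + ?S ys \<le> ?S (xs @ ys)" if "?Q (xs @ ys)" "xs \<noteq> []" "ys \<noteq> []" for xs ys
      using that by (intro scaled_pairs_span_append_ge) auto
    show "sum_list (map (\<lambda>_. 3 + c) ds) - (real M + 4 * real a') \<le> ?S ds"
      if "?Q ds" "ds \<noteq> []" "\<forall>x\<in>set ds. snd x div M' = snd (hd ds) div M'" for ds
    proof -
      have "(3 + c) * real (length ds) - real M - 4 * real a' \<le> ?S ds"
        using that(1) by (intro pairs_span_ge_in_block[OF _ that(2) _ that(3)]) auto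
      then show ?thesis by (simp add: sum_list_triv algebra_simps)
    qed
    show "?Q cs" using assms by blast
    have "sorted_wrt (\<lambda>x y. snd x div M' \<le> snd y div M') cs"
      using increasing_pairs_sorted_wrt(2)[OF assms(1)]
      by (rule sorted_wrt_mono_rel[rotated]) (simp add: div_le_mono)
    then show "sorted (map (\<lambda>x. snd x div M') cs)" by (simp add: sorted_wrt_map)
  qed (use assms in simp_all)
  then show ?thesis by (simp add: sum_list_triv mult.commute)
qed

lemma pairs_span_ge:
  assumes "increasing_pairs cs" "cs \<noteq> []"
    and matched: "\<forall>x\<in>set cs. block_symbol a b M (fst x) = block_symbol a' b' M' (snd x)"
  shows "(3 + c) * real (length cs) - (2 * real M + 8 * real a') \<le> (1 + 4 / real R) * pairs_span cs"
proof -
  have sorted: "sorted_wrt (\<lambda>x y. snd x < snd y) cs" by (rule increasing_pairs_sorted_wrt(2)[OF assms(1)])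
  have "snd (hd cs) \<le> snd (last cs)" using sorted_wrt_hd_le[OF sorted, of "last cs"] assms(2) by simp
  moreover have "real (snd (last cs)) - real (snd (hd cs)) \<le> pairs_span cs"
    using assms(2) coord_span_nonneg[OF increasing_pairs_sorted_wrt(1)[OF assms(1)]]
    by (simp add: pairs_span_def coord_span_def)
  then have "2 * (real (snd (last cs)) - real (snd (hd cs))) / real R \<le> 2 * pairs_span cs / real R"
    by (intro divide_right_mono) auto
  ultimately have "(real M + 4 * real a') * (real (snd (last cs) div M') - real (snd (hd cs) div M') + 1)
      \<le> 2 * pairs_span cs / real R + 2 * real M + 8 * real a'"
    using block_count_le[of "snd (hd cs)" "snd (last cs)"] by linarith
  moreover have "(1 + 4 / real R) * pairs_span cs = (1 + 2 / real R) * pairs_span cs + 2 * pairs_span cs / real R"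
    by (simp add: algebra_simps add_divide_distrib)
  ultimately show ?thesis using pairs_span_ge_by_flip_blocks[OF assms] by linarith
qed

end

section \<open>Longest common subsequences\<close>

lemma finite_common_subseq_lengths: "finite {length v | v. subseq v u1 \<and> subseq v u2}"
  by (rule finite_subset[of _ "{..length u1}"]) (auto dest: list_emb_length)

lemma length_le_LCS: "subseq v u1 \<Longrightarrow> subseq v u2 \<Longrightarrow> length v \<le> LCS u1 u2"
  unfolding LCS_def by (rule Max_ge[OF finite_common_subseq_lengths]) blast

lemma LCS_witness:
  obtains v where "subseq v u1" "subseq v u2" "length v = LCS u1 u2"
proof -
  have "length [] \<in> {length v | v. subseq v u1 \<and> subseq v u2}"
    by (rule CollectI, rule exI[of _ "[]"]) simp
  then have "LCS u1 u2 \<in> {length v | v. subseq v u1 \<and> subseq v u2}"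
    unfolding LCS_def by (intro Max_in[OF finite_common_subseq_lengths]) blast
  then obtain v where "subseq v u1" "subseq v u2" "LCS u1 u2 = length v" by blast
  then show ?thesis using that by simp
qed

lemma subseq_nth_Cons_drop:
  assumes "i \<le> k" "k < length w" "subseq v (drop (Suc k) w)"
  shows "subseq (w ! k # v) (drop i w)"
proof -
  have "drop (k - i) (drop i w) = w ! k # drop (Suc k) w"
    using assms(1,2) by (simp add: Cons_nth_drop_Suc)
  then have "drop i w = take (k - i) (drop i w) @ w ! k # drop (Suc k) w"
    by (metis append_take_drop_id)
  moreover have "subseq (w ! k # v) (w ! k # drop (Suc k) w)" using assms(3) by simp
  ultimately show ?thesis by (metis list_emb_append2)
qed

lemma Suc_LCS_drop_le:
  assumes "i \<le> k" "k < length w1" "j \<le> l" "l < length w2" "w1 ! k = w2 ! l"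
  shows "Suc (LCS (drop (Suc k) w1) (drop (Suc l) w2)) \<le> LCS (drop i w1) (drop j w2)"
proof -
  obtain v where v1: "subseq v (drop (Suc k) w1)" and v2: "subseq v (drop (Suc l) w2)"
    and v: "length v = LCS (drop (Suc k) w1) (drop (Suc l) w2)" by (rule LCS_witness)
  have "length (w1 ! k # v) \<le> LCS (drop i w1) (drop j w2)"
    using subseq_nth_Cons_drop[OF assms(1,2) v1] subseq_nth_Cons_drop[OF assms(3,4) v2]
    unfolding assms(5) by (rule length_le_LCS)
  then show ?thesis using v by simp
qed

lemma card_same_quotient_le:
  assumes "sorted_wrt (\<lambda>x y. f x < f y) xs" "0 < N"
  shows "card {x \<in> set xs. f x div N = k} \<le> N"
proof -
  have "f ` {x \<in> set xs. f x div N = k} \<subseteq> {k * N..<k * N + N}"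
  proof
    fix y assume "y \<in> f ` {x \<in> set xs. f x div N = k}"
    then have "y = k * N + y mod N" using div_mult_mod_eq[of y N] by auto
    moreover have "y mod N < N" using assms(2) by simp
    ultimately have "k * N \<le> y" "y < k * N + N" by linarith+
    then show "y \<in> {k * N..<k * N + N}" by simp
  qed
  then have "card (f ` {x \<in> set xs. f x div N = k}) \<le> N"
    using card_mono[of "{k * N..<k * N + N}"] by simp
  moreover have "inj_on f {x \<in> set xs. f x div N = k}"
    using sorted_wrt_less_distinct[OF assms(1)] by (auto simp: distinct_map intro: inj_on_subset)
  ultimately show ?thesis by (simp add: card_image)
qed

lemma increasing_pairs_least:
  assumes "increasing_pairs ps" "Z \<subseteq> set ps" "Z \<noteq> {}"
  obtains z where "z \<in> Z" "\<forall>x\<in>Z. fst z \<le> fst x \<and> snd z \<le> snd x"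
proof
  let ?F = "filter (\<lambda>x. x \<in> Z) ps"
  have "?F \<noteq> []" using assms(2,3) by (auto simp: filter_empty_conv)
  then have "hd ?F \<in> set ?F" by (rule hd_in_set)
  then show "hd ?F \<in> Z" by simp
  have sorted: "sorted_wrt (\<lambda>p q. fst p < fst q) ?F" "sorted_wrt (\<lambda>p q. snd p < snd q) ?F"
    using increasing_pairs_sorted_wrt[OF assms(1)] by (simp_all add: sorted_wrt_filter)
  show "\<forall>x\<in>Z. fst (hd ?F) \<le> fst x \<and> snd (hd ?F) \<le> snd x"
  proof
    fix x assume "x \<in> Z"
    then have "x \<in> set ?F" using assms(2) by auto
    then show "fst (hd ?F) \<le> fst x \<and> snd (hd ?F) \<le> snd x"
      using sorted_wrt_hd_le[OF sorted(1)] sorted_wrt_hd_le[OF sorted(2)] by blast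
  qed
qed

definition same_letter_pairs ::
    "nat \<Rightarrow> 'a list \<Rightarrow> 'a list \<Rightarrow> (nat \<times> nat) list \<Rightarrow> nat \<Rightarrow> nat \<Rightarrow> (nat \<times> nat) set" where
  "same_letter_pairs N w1 w2 ps i j =
     {x \<in> set ps. w1 ! (fst x div N) = w2 ! (snd x div N) \<and> i \<le> fst x div N \<and> j \<le> snd x div N}"

text \<open>The pairs meeting the row or the column of the first matched letter pair number at most
  \<open>2 N\<close>; all others lie strictly beyond it in both words.\<close>
lemma card_same_letter_pairs_step:
  assumes "increasing_pairs ps" "0 < N"
    and z: "z \<in> same_letter_pairs N w1 w2 ps i j"
    and least: "\<forall>x\<in>same_letter_pairs N w1 w2 ps i j. fst z \<le> fst x \<and> snd z \<le> snd x"
  shows "card (same_letter_pairs N w1 w2 ps i j)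
    \<le> 2 * N + card (same_letter_pairs N w1 w2 ps (Suc (fst z div N)) (Suc (snd z div N)))"
proof -
  define A where "A = {x \<in> set ps. fst x div N = fst z div N}"
  define B where "B = {x \<in> set ps. snd x div N = snd z div N}"
  let ?Z' = "same_letter_pairs N w1 w2 ps (Suc (fst z div N)) (Suc (snd z div N))"
  have "same_letter_pairs N w1 w2 ps i j \<subseteq> A \<union> B \<union> ?Z'"
  proof
    fix x assume x: "x \<in> same_letter_pairs N w1 w2 ps i j"
    then have "fst z div N \<le> fst x div N" "snd z div N \<le> snd x div N"
      using least div_le_mono by blast+
    then show "x \<in> A \<union> B \<union> ?Z'" using x by (auto simp: A_def B_def same_letter_pairs_def)
  qed
  then have "card (same_letter_pairs N w1 w2 ps i j) \<le> card (A \<union> B \<union> ?Z')"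
    by (intro card_mono) (auto simp: A_def B_def same_letter_pairs_def)
  moreover have "card (A \<union> B \<union> ?Z') \<le> card A + card B + card ?Z'"
    by (meson card_Un_le add_right_mono le_trans)
  moreover have "card A \<le> N" "card B \<le> N"
    unfolding A_def B_def using increasing_pairs_sorted_wrt[OF assms(1)] assms(2)
    by (simp_all add: card_same_quotient_le)
  ultimately show ?thesis by linarith
qed

lemma card_same_letter_pairs_le:
  assumes "increasing_pairs ps" "0 < N"
    and "\<forall>x\<in>set ps. fst x < N * length w1 \<and> snd x < N * length w2"
  shows "card (same_letter_pairs N w1 w2 ps i j) \<le> 2 * N * LCS (drop i w1) (drop j w2)"
proof (induction "length w1 - i" arbitrary: i j rule: less_induct)
  case less
  show ?case
  proof (cases "same_letter_pairs N w1 w2 ps i j = {}")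
    case False
    then obtain z where z: "z \<in> same_letter_pairs N w1 w2 ps i j"
      and least: "\<forall>x\<in>same_letter_pairs N w1 w2 ps i j. fst z \<le> fst x \<and> snd z \<le> snd x"
      using increasing_pairs_least[OF assms(1) _ False] by (auto simp: same_letter_pairs_def)
    define k where "k = fst z div N"
    define l where "l = snd z div N"
    have k: "i \<le> k" "k < length w1" and l: "j \<le> l" "l < length w2" and "w1 ! k = w2 ! l"
      using assms(2,3) z by (auto simp: k_def l_def same_letter_pairs_def div_less_iff_less_mult mult.commute)
    have "card (same_letter_pairs N w1 w2 ps i j) \<le> 2 * N + card (same_letter_pairs N w1 w2 ps (Suc k) (Suc l))"
      unfolding k_def l_def by (rule card_same_letter_pairs_step[OF assms(1,2) z least])
    also have "\<dots> \<le> 2 * N + 2 * N * LCS (drop (Suc k) w1) (drop (Suc l) w2)"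
      using less[of "Suc k" "Suc l"] k by simp
    also have "\<dots> = 2 * N * Suc (LCS (drop (Suc k) w1) (drop (Suc l) w2))" by simp
    also have "\<dots> \<le> 2 * N * LCS (drop i w1) (drop j w2)"
      using Suc_LCS_drop_le[OF k l \<open>w1 ! k = w2 ! l\<close>] by (rule mult_le_mono2)
    finally show ?thesis .
  qed simp
qed

lemma length_filter_matched_letters_le:
  assumes "increasing_pairs ps" "0 < N"
    and "\<forall>x\<in>set ps. fst x < N * length w1 \<and> snd x < N * length w2"
  shows "length (filter (\<lambda>x. w1 ! (fst x div N) = w2 ! (snd x div N)) ps) \<le> 2 * N * LCS w1 w2"
proof -
  have "distinct ps"
    using sorted_wrt_less_distinct[OF increasing_pairs_sorted_wrt(1)[OF assms(1)]] by (simp add: distinct_map)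
  then have "length (filter (\<lambda>x. w1 ! (fst x div N) = w2 ! (snd x div N)) ps)
      = card {x \<in> set ps. w1 ! (fst x div N) = w2 ! (snd x div N) \<and> 0 \<le> fst x div N \<and> 0 \<le> snd x div N}"
    using distinct_card[OF distinct_filter[of ps "\<lambda>x. w1 ! (fst x div N) = w2 ! (snd x div N)"]] by simp
  also have "\<dots> \<le> 2 * N * LCS (drop 0 w1) (drop 0 w2)"
    unfolding same_letter_pairs_def[symmetric] by (rule card_same_letter_pairs_le[OF assms])
  finally show ?thesis by simp
qed

lemma span_bound_arithmetic:
  fixes s nS nF D L \<Lambda> c e :: real
  assumes e: "0 < e" "e \<le> 1 / 10" and c: "0 \<le> c" "c \<le> 1 / 2"
    and nonneg: "0 \<le> s" "0 \<le> nS" "0 \<le> nF" "0 \<le> L" "0 \<le> D" "0 \<le> \<Lambda>"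
    and weights: "2 * nS + (3 + c) * nF - 3 * L * e * (D + 1) \<le> (1 + 4 * e) * s"
    and distance: "2 * L * D - 4 * L \<le> s"
    and same_letter: "nS \<le> 4 * L * \<Lambda>"
  shows "(3 + c - 28 * e) * (nS + nF) - 16 * L * \<Lambda> - 40 * L * e \<le> s"
proof (rule ccontr)
  define T where "T = (3 + c - 28 * e) * (nS + nF) - 16 * L * \<Lambda> - 40 * L * e"
  assume "\<not> T \<le> s"
  then have "s < T" by simp
  have "e * s \<ge> e * (2 * L * D - 4 * L)" using distance e by (intro mult_left_mono) auto
  then have eD: "e * s \<ge> 2 * (e * (L * D)) - 4 * (e * L)" by (simp add: algebra_simps)
  have cS: "c * nS \<le> nS / 2" and cF: "c * nF \<le> nF / 2"
    using mult_right_mono[OF c(2) nonneg(2)] mult_right_mono[OF c(2) nonneg(3)] by simp_all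
  have "T \<le> 3 * nS + 3 * nF + c * nS + c * nF"
    using e nonneg mult_nonneg_nonneg[of L \<Lambda>] unfolding T_def by (simp add: algebra_simps)
  then have "e * s \<le> e * (7 / 2 * (nS + nF))"
    using \<open>s < T\<close> cS cF e by (intro mult_left_mono) auto
  then have "e * s \<le> 7 / 2 * (e * nS) + 7 / 2 * (e * nF)" by (simp add: algebra_simps)
  moreover have "s + 4 * (e * s) \<ge> 2 * nS + 3 * nF + c * nF - 3 * (e * (L * D)) - 3 * (e * L)"
    using weights by (simp add: algebra_simps)
  moreover have "T = 3 * nS + 3 * nF + c * nS + c * nF - 28 * (e * nS) - 28 * (e * nF)
      - 16 * (L * \<Lambda>) - 40 * (e * L)"
    unfolding T_def by (simp add: algebra_simps)
  moreover have "0 \<le> e * nS" "0 \<le> e * nF" "0 \<le> e * L" "0 \<le> L * \<Lambda>" using e nonneg by simp_all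
  ultimately show False using \<open>s < T\<close> eD cS same_letter by linarith
qed

section \<open>The words \<open>g\<^sub>l\<close>\<close>

lemma nth_concat_map_equal_length:
  assumes "\<forall>l\<in>set w. length (f l) = m" "x < m * length w"
  shows "concat (map f w) ! x = f (w ! (x div m)) ! (x mod m)"
  using assms
proof (induction w arbitrary: x)
  case (Cons l w)
  show ?case
  proof (cases "x < m")
    case True
    then show ?thesis using Cons.prems by (simp add: nth_append)
  next
    case False
    have "0 < m" using False Cons.prems(2) by (cases "m = 0") auto
    have "x - m < m * length w" using False Cons.prems(2) by auto
    then have "concat (map f w) ! (x - m) = f (w ! ((x - m) div m)) ! ((x - m) mod m)"
      using Cons by simp
    moreover have "(x - m) div m = x div m - 1" "(x - m) mod m = x mod m" "1 \<le> x div m"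
      using False \<open>0 < m\<close> by (simp_all add: div_if mod_if)
    ultimately show ?thesis using False Cons.prems(1)
      by (simp add: nth_append nth_Cons' split: if_split_asm)
  qed
qed simp

lemma length_concat_map_equal_length:
  "\<forall>l\<in>set w. length (f l) = m \<Longrightarrow> length (concat (map f w)) = m * length w"
  by (induction w) auto

lemma nth_concat_replicate:
  "i < n * length xs \<Longrightarrow> concat (replicate n xs) ! i = xs ! (i mod length xs)"
  using nth_concat_map_equal_length[of "replicate n ()" "\<lambda>_. xs" "length xs" i]
  by (simp add: map_replicate_const mult.commute)

lemma length_concat_replicate: "length (concat (replicate n xs)) = n * length xs"
  by (simp add: length_concat sum_list_replicate)

lemma block_symbol_mod:
  assumes "(2 * M) dvd N" "(a + b) dvd N" "0 < M"
  shows "block_symbol a b M (x mod N) = block_symbol a b M x"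
proof -
  obtain j where j: "N = 2 * M * j" using assms(1) by (rule dvdE)
  have "x = M * (2 * (j * (x div N))) + x mod N" using div_mult_mod_eq[of x N] j by (simp add: algebra_simps)
  then have "x div M = 2 * (j * (x div N)) + x mod N div M"
    using assms(3) by (metis div_mult_self2 less_numeral_extra(3) add.commute mult.commute not_gr0)
  moreover have "x mod N mod (a + b) = x mod (a + b)" using assms(2) by (rule mod_mod_cancel)
  ultimately show ?thesis by (simp add: block_symbol_def)
qed

lemma nth_blocks_block_symbol:
  fixes a b M N :: nat
  assumes "N * (a + b) = M" "y < 2 * M"
  shows "(concat (replicate N (replicate a 1 @ replicate b 2))
        @ concat (replicate N (replicate a 2 @ replicate b 1))) ! y = block_symbol a b M y"
proof -
  have dvd: "(a + b) dvd M" using assms(1) by (metis dvd_triv_right)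
  have nth_period: "concat (replicate N (replicate a u @ replicate b v)) ! z
      = (if z mod (a + b) < a then u else v)" if "z < M" for z u v :: nat
  proof -
    have "z mod (a + b) < a + b" using that assms(1) by (cases "a + b = 0") auto
    then show ?thesis
      using that assms(1) by (subst nth_concat_replicate) (auto simp: nth_append mult.commute)
  qed
  show ?thesis
  proof (cases "y < M")
    case True
    then show ?thesis
      using nth_period[OF True] assms(1) by (simp add: nth_append length_concat_replicate block_symbol_def)
  next
    case False
    have "y - M < M" "y div M = 1" using False assms(2) by (simp_all add: le_div_geq)
    moreover obtain k where "M = (a + b) * k" using dvd by blast
    then have "y = (y - M) + (a + b) * k" using False by simp
    then have "y mod (a + b) = (y - M) mod (a + b)" by (metis mod_mult_self2)
    ultimately show ?thesis
      using nth_period[of "y - M"] False assms(1)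
      by (simp add: nth_append length_concat_replicate block_symbol_def)
  qed
qed

locale construction =
  fixes c :: real and K t R L :: nat
  assumes c_nonneg: "0 \<le> c" and c_less: "c < sqrt 2 - 1" and t_pos: "0 < t"
    and R_eq: "real R = (1 + c) * real t" and R_ge: "10 \<le> R" and L_eq: "L = R ^ (2 * K + 1)"
begin

text \<open>The word \<open>g\<^sub>l\<close> is built from \<open>1\<^sub>M\<^sub>,\<^sub>a\<close> and \<open>2\<^sub>M\<^sub>,\<^sub>a\<close> with \<open>a = run_len l\<close>,
  \<open>c a = gap_len l\<close> and \<open>M = flip_len l\<close>.\<close>
definition admissible :: "nat \<Rightarrow> bool" where
  "admissible l \<longleftrightarrow> l \<in> {1..K} \<and> c * real (R ^ (K - l)) \<in> \<int>"

definition run_len :: "nat \<Rightarrow> nat" where "run_len l = R ^ (K - l)"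
definition gap_len :: "nat \<Rightarrow> nat" where "gap_len l = nat \<lfloor>c * real (R ^ (K - l))\<rfloor>"
definition flip_len :: "nat \<Rightarrow> nat" where "flip_len l = R ^ (K + 1 + l)"

lemma R_pos: "0 < R" using R_ge by simp

lemma c_small: "c * c + 2 * c \<le> 1"
proof -
  have "(c + 1) ^ 2 < (sqrt 2) ^ 2"
    using c_less c_nonneg by (intro power_strict_mono) auto
  then show ?thesis by (simp add: power2_eq_square algebra_simps)
qed

lemma run_len_pos: "0 < run_len l" using R_pos by (simp add: run_len_def)

lemma flip_len_pos: "0 < flip_len l" using R_pos by (simp add: flip_len_def)

lemma gap_len_eq: "admissible l \<Longrightarrow> real (gap_len l) = c * real (run_len l)"
  using c_nonneg by (auto simp: admissible_def gap_len_def run_len_def elim!: Ints_cases)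

lemma periods_per_flip:
  assumes "admissible l"
  shows "(R ^ (2 * l) * t) * (run_len l + gap_len l) = flip_len l"
proof -
  have "flip_len l = R ^ (2 * l + 1 + (K - l))"
    unfolding flip_len_def using assms by (intro arg_cong[where f = "power R"]) (simp add: admissible_def)
  then have "real (flip_len l) = real (R ^ (2 * l)) * real R * real (run_len l)"
    by (simp add: run_len_def power_add)
  also have "\<dots> = real (R ^ (2 * l) * t) * (real (run_len l) + real (gap_len l))"
    using R_eq gap_len_eq[OF assms] by (simp add: algebra_simps)
  finally show ?thesis by (metis of_nat_add of_nat_eq_iff of_nat_mult)
qed

lemma L_eq_flips: "l \<le> K \<Longrightarrow> L = R ^ (K - l) * flip_len l"
  unfolding L_eq flip_len_def power_add[symmetric] by (intro arg_cong[where f = "power R"]) simp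

lemma gword_nth:
  assumes "admissible l"
  shows "length (gword c R K l) = 2 * L"
    and "y < 2 * L \<Longrightarrow> gword c R K l ! y = block_symbol (run_len l) (gap_len l) (flip_len l) y"
proof -
  define N where "N = R ^ (2 * l) * t"
  have N: "N * (run_len l + gap_len l) = flip_len l"
    unfolding N_def by (rule periods_per_flip[OF assms])
  have "real (flip_len l) = real N * (real (run_len l) + real (gap_len l))"
    by (simp flip: N)
  also have "\<dots> = real N * ((1 + c) * real (run_len l))"
    using gap_len_eq[OF assms] by (simp add: algebra_simps)
  finally have "real (flip_len l) / ((1 + c) * real (run_len l)) = real N"
    using run_len_pos[of l] c_nonneg by simp
  then have "one_blk c (flip_len l) (run_len l) @ two_blk c (flip_len l) (run_len l)
      = concat (replicate N (replicate (run_len l) 1 @ replicate (gap_len l) 2))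
        @ concat (replicate N (replicate (run_len l) 2 @ replicate (gap_len l) 1))"
    by (simp add: one_blk_def two_blk_def gap_len_def run_len_def)
  moreover have "R ^ (2 * K + 1) div R ^ (K + 1 + l) = R ^ (K - l)"
    using L_eq_flips[of l] assms flip_len_pos[of l] by (simp add: admissible_def L_eq flip_len_def)
  ultimately have g: "gword c R K l = concat (replicate (R ^ (K - l))
      (concat (replicate N (replicate (run_len l) 1 @ replicate (gap_len l) 2))
        @ concat (replicate N (replicate (run_len l) 2 @ replicate (gap_len l) 1))))"
    by (simp add: gword_def flip_len_def run_len_def)
  have period: "length (concat (replicate N (replicate (run_len l) (1::nat) @ replicate (gap_len l) 2))
        @ concat (replicate N (replicate (run_len l) 2 @ replicate (gap_len l) 1))) = 2 * flip_len l"
    using N by (simp add: length_concat_replicate)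
  have L: "L = R ^ (K - l) * flip_len l" using assms by (simp add: admissible_def L_eq_flips)
  show "length (gword c R K l) = 2 * L"
    unfolding g L using period by (simp add: length_concat_replicate)
  assume "y < 2 * L"
  then have "gword c R K l ! y = block_symbol (run_len l) (gap_len l) (flip_len l) (y mod (2 * flip_len l))"
    unfolding g using period nth_blocks_block_symbol[OF N] flip_len_pos[of l] L
    by (subst nth_concat_replicate) (auto simp: mult.commute mult.left_commute)
  also have "\<dots> = block_symbol (run_len l) (gap_len l) (flip_len l) y"
  proof (rule block_symbol_mod)
    show "(run_len l + gap_len l) dvd (2 * flip_len l)"
      using N by (metis dvd_mult dvd_triv_right)
  qed (use flip_len_pos[of l] in auto)
  finally show "gword c R K l ! y = block_symbol (run_len l) (gap_len l) (flip_len l) y" .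
qed

definition level_symbol :: "nat \<Rightarrow> nat \<Rightarrow> nat" where
  "level_symbol l = block_symbol (run_len l) (gap_len l) (flip_len l)"

lemma hat_nth:
  assumes "\<forall>l\<in>set w. admissible l"
  shows "length (hat c R K w) = 2 * L * length w"
    and "x < 2 * L * length w \<Longrightarrow> hat c R K w ! x = level_symbol (w ! (x div (2 * L))) x"
proof -
  have len: "\<forall>l\<in>set w. length (gword c R K l) = 2 * L" using assms gword_nth(1) by blast
  show "length (hat c R K w) = 2 * L * length w"
    unfolding hat_def by (rule length_concat_map_equal_length[OF len])
  assume x: "x < 2 * L * length w"
  define l where "l = w ! (x div (2 * L))"
  have "0 < L" using R_pos by (simp add: L_eq)
  then have "x div (2 * L) < length w" using x by (simp add: div_less_iff_less_mult mult.commute)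
  then have l: "admissible l" using assms l_def by simp
  then have lK: "l \<le> K" by (simp add: admissible_def)
  have "hat c R K w ! x = gword c R K l ! (x mod (2 * L))"
    unfolding hat_def l_def by (rule nth_concat_map_equal_length[OF len x])
  also have "\<dots> = level_symbol l (x mod (2 * L))"
    using gword_nth(2)[OF l] \<open>0 < L\<close> by (simp add: level_symbol_def)
  also have "\<dots> = level_symbol l x"
    unfolding level_symbol_def
  proof (rule block_symbol_mod)
    show "(2 * flip_len l) dvd (2 * L)" using L_eq_flips[OF lK] by simp
    show "(run_len l + gap_len l) dvd (2 * L)"
      using L_eq_flips[OF lK] periods_per_flip[OF l] by (metis dvd_mult dvd_triv_right)
  qed (rule flip_len_pos)
  finally show "hat c R K w ! x = level_symbol (w ! (x div (2 * L))) x" unfolding l_def .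
qed

lemma two_scales_levels:
  assumes "admissible l" "admissible m" "l < m"
  shows "two_scales (run_len l) (gap_len l) (flip_len l) (run_len m) (gap_len m) (flip_len m) c R"
proof
  have lm: "1 \<le> l" "m \<le> K" using assms by (auto simp: admissible_def)
  have "R * run_len m = R ^ Suc (K - m)" by (simp add: run_len_def)
  also have "\<dots> \<le> R ^ (K - l)" using assms(3) lm R_pos by (intro power_increasing) auto
  finally show "R * run_len m \<le> run_len l" by (simp add: run_len_def)
  have "R * flip_len l = R ^ Suc (K + 1 + l)" by (simp add: flip_len_def)
  also have "\<dots> \<le> R ^ (K + 1 + m)" using assms(3) R_pos by (intro power_increasing) auto
  finally show "R * flip_len l \<le> flip_len m" by (simp add: flip_len_def)
  have "4 \<le> R ^ (2 * m)" using R_ge assms(3) lm power_increasing[of 1 "2 * m" R] by simp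
  then have "4 * R * run_len m \<le> R ^ (2 * m) * R ^ Suc (K - m)"
    using mult_right_mono[of 4 "R ^ (2 * m)" "R * run_len m"] by (simp add: run_len_def mult.assoc)
  also have "\<dots> = R ^ (2 * m + Suc (K - m))" by (simp only: power_add)
  also have "\<dots> = flip_len m"
    unfolding flip_len_def using lm by (intro arg_cong[where f = "power R"]) simp
  finally show "4 * R * run_len m \<le> flip_len m" .
  show "(run_len l + gap_len l) dvd flip_len l"
    using periods_per_flip[OF assms(1)] by (metis dvd_triv_right)
  show "0 < run_len m" by (rule run_len_pos)
  show "real (gap_len l) = c * real (run_len l)" by (rule gap_len_eq[OF assms(1)])
  show "real (gap_len m) = c * real (run_len m)" by (rule gap_len_eq[OF assms(2)])
qed (simp_all add: flip_len_pos R_pos c_nonneg c_small)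

lemma two_scales_error_le:
  assumes "admissible l" "admissible m" "l < m"
  shows "2 * real (flip_len l) + 8 * real (run_len m) \<le> 3 * real L / real R"
proof -
  have lm: "1 \<le> l" "1 \<le> m" "m \<le> K" using assms by (auto simp: admissible_def)
  have "flip_len l \<le> R ^ (2 * K)"
    unfolding flip_len_def using assms(3) lm R_pos by (intro power_increasing) auto
  moreover have "8 * run_len m \<le> R ^ (2 * K)"
  proof -
    have "8 \<le> R ^ (K + m)" using R_ge lm power_increasing[of 1 "K + m" R] by simp
    then have "8 * run_len m \<le> R ^ (K + m) * R ^ (K - m)" by (simp add: run_len_def)
    also have "\<dots> = R ^ ((K + m) + (K - m))" by (simp only: power_add)
    also have "\<dots> = R ^ (2 * K)" using lm by (intro arg_cong[where f = "power R"]) simp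
    finally show ?thesis .
  qed
  ultimately have "2 * flip_len l + 8 * run_len m \<le> 3 * R ^ (2 * K)" by linarith
  then have "real (2 * flip_len l + 8 * run_len m) \<le> real (3 * R ^ (2 * K))"
    by (simp only: of_nat_le_iff)
  then have "2 * real (flip_len l) + 8 * real (run_len m) \<le> 3 * real (R ^ (2 * K))"
    by simp
  also have "3 * real (R ^ (2 * K)) = 3 * real L / real R"
    using R_pos by (simp add: L_eq)
  finally show ?thesis .
qed

definition matched_pair :: "nat list \<Rightarrow> nat list \<Rightarrow> nat \<times> nat \<Rightarrow> bool" where
  "matched_pair w1 w2 x \<longleftrightarrow> fst x < 2 * L * length w1 \<and> snd x < 2 * L * length w2
     \<and> hat c R K w1 ! fst x = hat c R K w2 ! snd x"

text \<open>The span a matched pair pays, up to lower order terms: 2 inside copies of the same word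
  \<open>g\<^sub>l\<close>, and \<open>3 + c\<close> between copies of words of different levels.\<close>
definition pair_weight :: "nat list \<Rightarrow> nat list \<Rightarrow> nat \<times> nat \<Rightarrow> real" where
  "pair_weight w1 w2 x = (if w1 ! (fst x div (2 * L)) = w2 ! (snd x div (2 * L)) then 2 else 3 + c)"

lemma L_pos: "0 < L" using R_pos by (simp add: L_eq)

lemma matched_pair_level_symbol:
  assumes "\<forall>l\<in>set w1. admissible l" "\<forall>l\<in>set w2. admissible l" "matched_pair w1 w2 x"
  shows "level_symbol (w1 ! (fst x div (2 * L))) (fst x) = level_symbol (w2 ! (snd x div (2 * L))) (snd x)"
  using assms(3) hat_nth(2)[OF assms(1), of "fst x"] hat_nth(2)[OF assms(2), of "snd x"]
  by (simp add: matched_pair_def)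

lemma pairs_span_ge_distinct_levels:
  assumes "admissible l" "admissible m" "l < m" "increasing_pairs cs" "cs \<noteq> []"
    and "\<forall>x\<in>set cs. level_symbol l (fst x) = level_symbol m (snd x)"
  shows "(3 + c) * real (length cs) - 3 * real L / real R \<le> (1 + 4 / real R) * pairs_span cs"
proof -
  interpret two_scales "run_len l" "gap_len l" "flip_len l" "run_len m" "gap_len m" "flip_len m" c R
    using two_scales_levels[OF assms(1-3)] .
  show ?thesis
    using pairs_span_ge[OF assms(4,5)] assms(6) two_scales_error_le[OF assms(1-3)]
    by (simp add: level_symbol_def)
qed

lemma pairs_span_ge_levels:
  assumes "admissible l" "admissible m" "increasing_pairs cs" "cs \<noteq> []"
    and symbols: "\<forall>x\<in>set cs. level_symbol l (fst x) = level_symbol m (snd x)"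
  shows "(if l = m then 2 else 3 + c) * real (length cs) - 3 * real L / real R
    \<le> (1 + 4 / real R) * pairs_span cs"
proof (cases l m rule: linorder_cases)
  case less
  then show ?thesis using pairs_span_ge_distinct_levels[OF assms(1,2) less assms(3-5)] by simp
next
  case equal
  have "(1 + 4 / real R) * pairs_span cs = pairs_span cs + 4 * pairs_span cs / real R"
    by (simp add: algebra_simps)
  moreover have "0 \<le> 4 * pairs_span cs / real R" "0 \<le> 3 * real L / real R"
    using pairs_span_ge_length[OF assms(3)] by simp_all
  ultimately show ?thesis
    using pairs_span_ge_length[OF assms(3)] unfolding if_P[OF equal] by linarith
next
  case greater
  have "\<forall>x\<in>set (map prod.swap cs). level_symbol m (fst x) = level_symbol l (snd x)"
    using symbols by auto
  then show ?thesis
    using pairs_span_ge_distinct_levels[OF assms(2,1) greater increasing_pairs_swap[OF assms(3)]] assms(4)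
      greater by (simp add: pairs_span_swap)
qed

lemma pairs_span_ge_in_letter_block:
  assumes adm1: "\<forall>l\<in>set w1. admissible l" and adm2: "\<forall>l\<in>set w2. admissible l"
    and cs: "increasing_pairs cs" "cs \<noteq> []" "\<forall>x\<in>set cs. matched_pair w1 w2 x"
    and block: "\<forall>x\<in>set cs. fst x div (2 * L) = i \<and> snd x div (2 * L) = j"
  shows "sum_list (map (pair_weight w1 w2) cs) - 3 * real L / real R \<le> (1 + 4 / real R) * pairs_span cs"
proof -
  obtain x0 where x0: "x0 \<in> set cs" using cs(2) by (cases cs) auto
  have "i < length w1" "j < length w2"
    using cs(3) block x0 L_pos by (auto simp: matched_pair_def div_less_iff_less_mult mult.commute)
  then have adm: "admissible (w1 ! i)" "admissible (w2 ! j)" using adm1 adm2 by simp_all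
  have "\<forall>x\<in>set cs. level_symbol (w1 ! i) (fst x) = level_symbol (w2 ! j) (snd x)"
  proof
    fix x assume "x \<in> set cs"
    then show "level_symbol (w1 ! i) (fst x) = level_symbol (w2 ! j) (snd x)"
      using matched_pair_level_symbol[OF adm1 adm2, of x] cs(3) block by simp
  qed
  moreover have "sum_list (map (pair_weight w1 w2) cs)
      = (if w1 ! i = w2 ! j then 2 else 3 + c) * real (length cs)"
    using block by (intro sum_list_map_eq_const) (simp add: pair_weight_def)
  ultimately show ?thesis using pairs_span_ge_levels[OF adm cs(1,2)] by simp
qed

lemma pairs_span_ge_weights:
  assumes adm1: "\<forall>l\<in>set w1. admissible l" and adm2: "\<forall>l\<in>set w2. admissible l"
    and ps: "increasing_pairs ps" "ps \<noteq> []" "\<forall>x\<in>set ps. matched_pair w1 w2 x"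
  defines "key \<equiv> \<lambda>x. fst x div (2 * L) + snd x div (2 * L)"
  shows "sum_list (map (pair_weight w1 w2) ps)
      - 3 * real L / real R * (real (key (last ps)) - real (key (hd ps)) + 1)
    \<le> (1 + 4 / real R) * pairs_span ps"
proof (rule superadditive_bound_by_runs[where key = key])
  let ?Q = "\<lambda>cs. increasing_pairs cs \<and> (\<forall>x\<in>set cs. matched_pair w1 w2 x)"
  let ?S = "\<lambda>cs. (1 + 4 / real R) * pairs_span cs"
  show "?Q xs \<and> ?Q ys" if "?Q (xs @ ys)" for xs ys
    using that by (simp add: increasing_pairs_append)
  show "?S xs + ?S ys \<le> ?S (xs @ ys)" if "?Q (xs @ ys)" "xs \<noteq> []" "ys \<noteq> []" for xs ys
    using that by (intro scaled_pairs_span_append_ge) auto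
  show "sum_list (map (pair_weight w1 w2) cs) - 3 * real L / real R \<le> ?S cs"
    if Q: "?Q cs" and "cs \<noteq> []" and same_key: "\<forall>x\<in>set cs. key x = key (hd cs)" for cs
  proof (rule pairs_span_ge_in_letter_block[OF adm1 adm2 _ \<open>cs \<noteq> []\<close>])
    have sorted: "sorted_wrt (\<lambda>x y. fst x < fst y) cs" "sorted_wrt (\<lambda>x y. snd x < snd y) cs"
      using increasing_pairs_sorted_wrt Q by blast+
    show "\<forall>x\<in>set cs. fst x div (2 * L) = fst (hd cs) div (2 * L) \<and> snd x div (2 * L) = snd (hd cs) div (2 * L)"
    proof
      fix x assume x: "x \<in> set cs"
      have "fst (hd cs) div (2 * L) \<le> fst x div (2 * L)" "snd (hd cs) div (2 * L) \<le> snd x div (2 * L)"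
        using sorted_wrt_hd_le[OF sorted(1) x] sorted_wrt_hd_le[OF sorted(2) x] by (simp_all add: div_le_mono)
      moreover have "key x = key (hd cs)" using same_key x by blast
      ultimately show "fst x div (2 * L) = fst (hd cs) div (2 * L) \<and> snd x div (2 * L) = snd (hd cs) div (2 * L)"
        unfolding key_def by simp
    qed
  qed (use Q in simp_all)
  show "?Q ps" using ps by blast
  have "sorted_wrt (\<lambda>x y. key x \<le> key y) ps"
    using ps(1) unfolding increasing_pairs_def key_def
    by (rule sorted_wrt_mono_rel[rotated]) (simp add: add_mono div_le_mono)
  then show "sorted (map key ps)" by (simp add: sorted_wrt_map)
qed (use ps in simp_all)

lemma pairs_span_ge_nonempty:
  assumes adm1: "\<forall>l\<in>set w1. admissible l" and adm2: "\<forall>l\<in>set w2. admissible l"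
    and ps: "increasing_pairs ps" "ps \<noteq> []" "\<forall>x\<in>set ps. matched_pair w1 w2 x"
  shows "(3 + c - 28 / real R) * real (length ps) - 16 * real L * real (LCS w1 w2) - 40 * real L / real R
    \<le> pairs_span ps"
proof -
  let ?same = "\<lambda>x. w1 ! (fst x div (2 * L)) = w2 ! (snd x div (2 * L))"
  define nS where "nS = length (filter ?same ps)"
  define nF where "nF = length (filter (\<lambda>x. \<not> ?same x) ps)"
  define D where "D = real (fst (last ps) div (2 * L) + snd (last ps) div (2 * L))
    - real (fst (hd ps) div (2 * L) + snd (hd ps) div (2 * L))"
  have le: "fst (hd ps) \<le> fst (last ps)" "snd (hd ps) \<le> snd (last ps)"
    using sorted_wrt_hd_le[OF increasing_pairs_sorted_wrt(1)[OF ps(1)], of "last ps"]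
      sorted_wrt_hd_le[OF increasing_pairs_sorted_wrt(2)[OF ps(1)], of "last ps"] ps(2)
    by simp_all
  have "pair_weight w1 w2 = (\<lambda>x. if ?same x then 2 else 3 + c)"
    by (simp add: pair_weight_def fun_eq_iff)
  then have "sum_list (map (pair_weight w1 w2) ps) = 2 * real nS + (3 + c) * real nF"
    unfolding nS_def nF_def by (simp only: sum_list_map_if)
  then have weights: "2 * real nS + (3 + c) * real nF - 3 * real L * (1 / real R) * (D + 1)
      \<le> (1 + 4 * (1 / real R)) * pairs_span ps"
    using pairs_span_ge_weights[OF adm1 adm2 ps] unfolding D_def by simp
  have distance: "2 * real L * D - 4 * real L \<le> pairs_span ps"
    using coord_span_ge_blocks[OF increasing_pairs_sorted_wrt(1)[OF ps(1)] ps(2), of "2 * L"]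
      coord_span_ge_blocks[OF increasing_pairs_sorted_wrt(2)[OF ps(1)] ps(2), of "2 * L"] L_pos
    unfolding D_def pairs_span_def by (simp add: algebra_simps)
  have "nS \<le> 2 * (2 * L) * LCS w1 w2"
    unfolding nS_def using ps(3) L_pos
    by (intro length_filter_matched_letters_le[OF ps(1)]) (auto simp: matched_pair_def)
  then have same_letter: "real nS \<le> 4 * real L * real (LCS w1 w2)"
    by (metis mult.assoc mult_2 numeral_Bit0 of_nat_le_iff of_nat_mult of_nat_numeral)
  have "c \<le> 1 / 2" using c_small zero_le_square[of c] by linarith
  moreover have "1 / real R \<le> 1 / 10" using R_ge by (simp add: frac_le)
  moreover have "0 \<le> D" using le unfolding D_def by (simp add: add_mono div_le_mono)
  ultimately have "(3 + c - 28 * (1 / real R)) * (real nS + real nF) - 16 * real L * real (LCS w1 w2)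
      - 40 * real L * (1 / real R) \<le> pairs_span ps"
    using span_bound_arithmetic[OF _ _ c_nonneg _ _ _ _ _ _ _ weights distance same_letter] R_pos
      pairs_span_ge_length[OF ps(1)]
    by simp
  moreover have "real nS + real nF = real (length ps)"
    using sum_length_filter_compl[of ?same ps] by (simp add: nS_def nF_def flip: of_nat_add)
  ultimately show ?thesis by simp
qed

lemma pairs_span_ge_matched:
  assumes "\<forall>l\<in>set w1. admissible l" "\<forall>l\<in>set w2. admissible l"
    and "increasing_pairs ps" "\<forall>x\<in>set ps. matched_pair w1 w2 x"
  shows "(3 + c - 28 / real R) * real (length ps) - 16 * real L * real (LCS w1 w2) - 40 * real L / real R
    \<le> pairs_span ps"
proof (cases "ps = []")
  case True
  have "0 \<le> 16 * real L * real (LCS w1 w2)" "0 \<le> 40 * real L / real R" by simp_all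
  moreover have "pairs_span ps = 0" "(3 + c - 28 / real R) * real (length ps) = 0"
    using True by (simp_all add: pairs_span_def coord_span_def)
  ultimately show ?thesis by linarith
qed (use pairs_span_ge_nonempty assms in blast)

end

section \<open>From position sets to matchings\<close>

lemma span_pos_image_eq_coord_span:
  assumes "sorted_wrt (\<lambda>x y. f x < f y) xs"
  shows "real (span_pos (f ` set xs)) = coord_span f xs"
proof (cases "xs = []")
  case False
  have "Max (f ` set xs) = f (last xs)" "Min (f ` set xs) = f (hd xs)"
    using False sorted_wrt_hd_le[OF assms] sorted_wrt_le_last[OF assms]
    by (auto intro!: Max_eqI Min_eqI)
  moreover have "f (hd xs) \<le> f (last xs)" using False sorted_wrt_hd_le[OF assms, of "last xs"] by simp
  ultimately show ?thesis
    using False coord_span_eq[OF assms False] by (simp add: span_pos_def)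
qed (simp add: span_pos_def coord_span_def)

lemma nths_eq_map_filter_upt:
  assumes "I \<subseteq> {..<length u}"
  shows "nths u I = map (nth u) (filter (\<lambda>i. i \<in> I) [0..<length u])"
proof -
  have "nths u I = map (nth u) (nths [0..<length u] I)"
    by (metis map_nth nths_map)
  moreover have "nths [0..<length u] I = filter (\<lambda>i. i \<in> I) [0..<length u]"
  proof -
    have "{i. i < length [0..<length u] \<and> [0..<length u] ! i \<in> I} = I" using assms by auto
    then show ?thesis using filter_eq_nths[of "\<lambda>i. i \<in> I" "[0..<length u]"] by simp
  qed
  ultimately show ?thesis by simp
qed

lemma common_subseq_increasing_pairs:
  assumes "common_subseq u1 u2 I1 I2"
  obtains ps where "increasing_pairs ps" "length ps = card I1"
    "\<forall>x\<in>set ps. fst x < length u1 \<and> snd x < length u2 \<and> u1 ! fst x = u2 ! snd x"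
    "pairs_span ps = real (span_pos I1 + span_pos I2)"
proof
  define l1 where "l1 = filter (\<lambda>i. i \<in> I1) [0..<length u1]"
  define l2 where "l2 = filter (\<lambda>i. i \<in> I2) [0..<length u2]"
  define ps where "ps = zip l1 l2"
  have I: "I1 \<subseteq> {..<length u1}" "I2 \<subseteq> {..<length u2}" using assms by (simp_all add: common_subseq_def)
  have eq: "map (nth u1) l1 = map (nth u2) l2"
    using assms nths_eq_map_filter_upt[OF I(1)] nths_eq_map_filter_upt[OF I(2)]
    by (simp add: common_subseq_def l1_def l2_def)
  then have len: "length l1 = length l2" by (metis length_map)
  have sorted: "sorted_wrt (<) l1" "sorted_wrt (<) l2"
    by (simp_all add: l1_def l2_def sorted_wrt_filter)
  have sets: "set l1 = I1" "set l2 = I2" using I by (auto simp: l1_def l2_def)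
  have maps: "map fst ps = l1" "map snd ps = l2" using len by (simp_all add: ps_def)
  show "increasing_pairs ps"
    unfolding increasing_pairs_def sorted_wrt_iff_nth_less
    using sorted len by (simp add: ps_def sorted_wrt_iff_nth_less)
  show "length ps = card I1"
    using distinct_card[of l1] sorted(1) sets(1) len by (simp add: ps_def strict_sorted_iff)
  show "\<forall>x\<in>set ps. fst x < length u1 \<and> snd x < length u2 \<and> u1 ! fst x = u2 ! snd x"
  proof
    fix x assume "x \<in> set ps"
    then obtain k where k: "k < length l1" "x = (l1 ! k, l2 ! k)" using len by (auto simp: ps_def in_set_zip)
    then have "u1 ! (l1 ! k) = u2 ! (l2 ! k)" using arg_cong[OF eq, of "\<lambda>xs. xs ! k"] len by simp
    moreover have "l1 ! k \<in> I1" "l2 ! k \<in> I2" using k len sets by (metis nth_mem)+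
    ultimately show "fst x < length u1 \<and> snd x < length u2 \<and> u1 ! fst x = u2 ! snd x"
      using I k by auto
  qed
  have "sorted_wrt (\<lambda>x y. fst x < fst y) ps" "sorted_wrt (\<lambda>x y. snd x < snd y) ps"
    using sorted maps by (metis sorted_wrt_map)+
  then show "pairs_span ps = real (span_pos I1 + span_pos I2)"
    using span_pos_image_eq_coord_span maps sets by (metis list.set_map of_nat_add pairs_span_def)
qed

theorem lemma3p10:
  fixes c :: real and K t R L :: nat and w1 w2 :: "nat list" and I1 I2 :: "nat set"
  assumes "0 \<le> c" and "c < sqrt 2 - 1"
    and "K \<ge> 1" and "t > 0"
    and "real R = (1 + c) * real t" and "R \<ge> 10"
    and "L = R ^ (2*K+1)"
    and "\<forall>l\<in>set w1. l \<in> {1..K} \<and> c * real (R ^ (K-l)) \<in> \<int>"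
    and "\<forall>l\<in>set w2. l \<in> {1..K} \<and> c * real (R ^ (K-l)) \<in> \<int>"
    and "common_subseq (hat c R K w1) (hat c R K w2) I1 I2"
  shows "real (span_pos I1 + span_pos I2)
           \<ge> (3 + c - 28 / real R) * real (card I1) - 16 * real L * real (LCS w1 w2)
             - 40 * real L / real R"
proof -
  interpret construction c K t R L
    using assms(1,2,4-7) by unfold_locales
  have adm1: "\<forall>l\<in>set w1. admissible l" and adm2: "\<forall>l\<in>set w2. admissible l"
    using assms(8,9) by (simp_all add: admissible_def)
  obtain ps where ps: "increasing_pairs ps" "length ps = card I1"
    "\<forall>x\<in>set ps. fst x < length (hat c R K w1) \<and> snd x < length (hat c R K w2)
       \<and> hat c R K w1 ! fst x = hat c R K w2 ! snd x"
    and span: "pairs_span ps = real (span_pos I1 + span_pos I2)"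
    using common_subseq_increasing_pairs[OF assms(10)] by blast
  have "\<forall>x\<in>set ps. matched_pair w1 w2 x"
    using ps(3) hat_nth(1)[OF adm1] hat_nth(1)[OF adm2] by (simp add: matched_pair_def)
  then show ?thesis
    using pairs_span_ge_matched[OF adm1 adm2 ps(1)] ps(2) span by simp
qed

end
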